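(* Let $\tau_1(\mathbf X)$ be the lifetime of a coherent system whose component lifetimes $X_1,\dots,X_n$ are (possibly dependent) identically distributed as $X$, with domination function $h_1$, i.e. $\bar F_{\tau_1(\mathbf X)}(x)=h_1(\bar F_X(x))$; and let $\tau_2(\mathbf Y)$ be the lifetime of a coherent system whose component lifetimes $Y_1,\dots,Y_m$ are identically distributed as $Y$, with domination function $h_2$, i.e. $\bar F_{\tau_2(\mathbf Y)}(x)=h_2(\bar F_Y(x))$. For $p\in(0,1)$ set $H_i(p)=p h_i'(p)/h_i(p)$, $i=1,2$. Suppose that (i) $H_1(p)$ and $H_1(p)/H_2(p)$ are decreasing in $p\in(0,1)$; (ii) $(1-p)H_1'(p)/H_1(p)$ or $(1-p)H_2'(p)/H_2(p)$ is decreasing in $p\in(0,1)$; (iii) $X\underset{c}{\prec}Y$ and $Y\le_{rhr}X$. Then $\tau_1(\mathbf X)\underset{c}{\prec}\tau_2(\mathbf Y)$.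
   Context: All random variables are non-negative and absolutely continuous with support $[0,\infty)$. For a random variable $W$, $f_W$, $F_W$, $\bar F_W=1-F_W$ denote its density, cdf and survival function, $r_W=f_W/\bar F_W$ its hazard (failure) rate and $\tilde r_W=f_W/F_W$ its reversed hazard rate. $X\le_{rhr}Y$ means $F_Y(x)/F_X(x)$ is increasing in $x$. $X\underset{c}{\prec}Y$ ($X$ ages faster than $Y$ in failure rate) means $r_X(x)/r_Y(x)$ is increasing in $x\ge0$. For a coherent system with identically distributed (possibly dependent) components with common lifetime distribution $X$, the system reliability can be written $h(\bar F_X(x))$, where the domination (dual distortion) function $h:[0,1]\to[0,1]$ depends on the structure and the survival copula, is increasing and continuous with $h(0)=0$, $h(1)=1$; domination functions are assumed differentiable as needed. "Increasing" means non-decreasing, "decreasing" means non-increasing. *)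

theory Defs
  imports "HOL-Analysis.Analysis"
begin

text \<open>A lifetime distribution: cdf F with density f, absolutely continuous,
  support [0,oo). Distributions are described by (cdf, density) pairs.\<close>
definition lifetime :: "(real \<Rightarrow> real) \<Rightarrow> (real \<Rightarrow> real) \<Rightarrow> bool" where
  "lifetime F f \<longleftrightarrow>
     (\<forall>x\<le>0. F x = 0) \<and>
     strict_mono_on {0..} F \<and>
     (F \<longlongrightarrow> 1) at_top \<and>
     (\<forall>x\<ge>0. f x \<ge> 0) \<and>
     (\<forall>x\<ge>0. (F has_real_derivative f x) (at x within {0..}))"

definition surv :: "(real \<Rightarrow> real) \<Rightarrow> real \<Rightarrow> real" where
  "surv F x = 1 - F x"

definition hazard :: "(real \<Rightarrow> real) \<Rightarrow> (real \<Rightarrow> real) \<Rightarrow> real \<Rightarrow> real" where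
  "hazard F f x = f x / surv F x"

definition ages_faster ::
  "(real \<Rightarrow> real) \<Rightarrow> (real \<Rightarrow> real) \<Rightarrow> (real \<Rightarrow> real) \<Rightarrow> (real \<Rightarrow> real) \<Rightarrow> bool" where
  "ages_faster FX fX FY fY \<longleftrightarrow> mono_on {0..} (\<lambda>x. hazard FX fX x / hazard FY fY x)"

definition rhr_le :: "(real \<Rightarrow> real) \<Rightarrow> (real \<Rightarrow> real) \<Rightarrow> bool" where
  "rhr_le FX FY \<longleftrightarrow> mono_on {0<..} (\<lambda>x. FY x / FX x)"

definition domination_fun :: "(real \<Rightarrow> real) \<Rightarrow> bool" where
  "domination_fun h \<longleftrightarrow> h ` {0..1} \<subseteq> {0..1} \<and> mono_on {0..1} h \<and>
     continuous_on {0..1} h \<and> h 0 = 0 \<and> h 1 = 1"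

definition Hfun :: "(real \<Rightarrow> real) \<Rightarrow> real \<Rightarrow> real" where
  "Hfun h p = p * deriv h p / h p"

end

theory Submission
  imports Defs
begin

text \<open>A system with domination function \<open>h\<close> has hazard rate \<open>H (surv F x) * r x\<close>, where
  \<open>r\<close> is the component hazard rate. Hence \<open>r\<^sub>\<tau>\<^sub>1 / r\<^sub>\<tau>\<^sub>2 = A * B\<close> with
  \<open>B = r\<^sub>X / r\<^sub>Y\<close> increasing by (iii) and \<open>A x = H\<^sub>1 p / H\<^sub>2 q\<close>, where
  \<open>p = surv FX x \<ge> q = surv FY x\<close> because \<open>Y \<le>\<^sub>r\<^sub>h\<^sub>r X\<close>. With
  \<open>\<psi>\<^sub>i t = (1 - t) H\<^sub>i' t / H\<^sub>i t\<close> and the reversed hazard rates \<open>\<alpha> \<ge> \<beta> \<ge> 0\<close> of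
  \<open>X\<close> and \<open>Y\<close>, the logarithmic derivative of \<open>A\<close> is \<open>\<psi>\<^sub>2 q \<beta> - \<psi>\<^sub>1 p \<alpha>\<close>.
  Condition (i) gives \<open>\<psi>\<^sub>1 \<le> 0\<close> and \<open>\<psi>\<^sub>1 \<le> \<psi>\<^sub>2\<close>, so by (ii) \<open>\<psi>\<^sub>1 p \<le> \<psi>\<^sub>2 q\<close>,
  and the logarithmic derivative is at least \<open>\<psi>\<^sub>1 p (\<beta> - \<alpha>) \<ge> 0\<close>.\<close>

lemma lifetime_nonpos_eq_0:
  assumes "lifetime F f" "x \<le> 0"
  shows "F x = 0"
  using assms unfolding lifetime_def by blast

lemma lifetime_pos:
  assumes "lifetime F f" "0 < x"
  shows "0 < F x"
  using assms strict_mono_onD[of "{0..}" F 0 x] unfolding lifetime_def by force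

lemma lifetime_tendsto_1:
  assumes "lifetime F f"
  shows "(F \<longlongrightarrow> 1) at_top"
  using assms unfolding lifetime_def by blast

lemma lifetime_less_1:
  assumes L: "lifetime F f" and x: "0 \<le> x"
  shows "F x < 1"
proof -
  have mono: "strict_mono_on {0..} F"
    using L unfolding lifetime_def by blast
  have "F (x + 1) \<le> 1"
  proof (rule tendsto_lowerbound[OF lifetime_tendsto_1[OF L]])
    show "\<forall>\<^sub>F y in at_top. F (x + 1) \<le> F y"
      unfolding eventually_at_top_linorder
      using x strict_mono_on_leD[OF mono] by (intro exI[of _ "x + 1"]) auto
  qed simp
  moreover have "F x < F (x + 1)"
    using x strict_mono_onD[OF mono] by simp
  ultimately show ?thesis by simp
qed

lemma lifetime_DERIV_within:
  assumes "lifetime F f" "0 \<le> x"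
  shows "(F has_real_derivative f x) (at x within {0..})"
  using assms unfolding lifetime_def by blast

lemma at_within_atLeast_0:
  fixes x :: real
  assumes "0 < x"
  shows "at x within {0..} = at x"
  using assms by (intro at_within_interior) (simp add: interior_real_atLeast)

lemma lifetime_DERIV:
  assumes "lifetime F f" "0 < x"
  shows "(F has_real_derivative f x) (at x)"
  using lifetime_DERIV_within[of F f x] at_within_atLeast_0[of x] assms by simp

lemma lifetime_continuous_on:
  assumes "lifetime F f"
  shows "continuous_on {0..} F"
  using lifetime_DERIV_within[OF assms] DERIV_continuous
  unfolding continuous_on_eq_continuous_within by blast

lemma lifetime_density_nonneg:
  assumes "lifetime F f" "0 \<le> x"
  shows "0 \<le> f x"
  using assms unfolding lifetime_def by blast

lemma lifetime_density_pos_somewhere: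
  assumes L: "lifetime F f" and x: "0 < x"
  shows "\<exists>z\<in>{0<..<x}. 0 < f z"
proof -
  have "continuous_on {0..x} F"
    using lifetime_continuous_on[OF L] by (rule continuous_on_subset) auto
  moreover have "F differentiable at y" if "0 < y" for y
    using lifetime_DERIV[OF L that] real_differentiable_def by blast
  ultimately obtain l z where z: "0 < z" "z < x" "(F has_real_derivative l) (at z)"
      and incr: "F x - F 0 = (x - 0) * l"
    using MVT[OF x] by blast
  have "l = f z"
    using DERIV_unique[OF z(3) lifetime_DERIV[OF L z(1)]] .
  moreover have "0 < (x - 0) * l"
    using incr lifetime_pos[OF L x] lifetime_nonpos_eq_0[OF L, of 0] by simp
  ultimately show ?thesis
    using x z by (auto simp: zero_less_mult_iff)
qed

lemma surv_in_unit:
  assumes "lifetime F f" "0 < x"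
  shows "surv F x \<in> {0<..<1}"
  using lifetime_pos[OF assms] lifetime_less_1[OF assms(1), of x] assms(2)
  by (simp add: surv_def)

lemma surv_DERIV:
  assumes "lifetime F f" "0 < x"
  shows "(surv F has_real_derivative - f x) (at x)"
  unfolding surv_def[abs_def] using lifetime_DERIV[OF assms]
  by (auto intro!: derivative_eq_intros)

lemma surv_attains:
  assumes L: "lifetime F f" and p: "p \<in> {0<..<1}"
  shows "\<exists>x>0. surv F x = p"
proof -
  have "\<forall>\<^sub>F y in at_top. 1 - p < F y"
    using order_tendstoD(1)[OF lifetime_tendsto_1[OF L]] p by simp
  then obtain b where b: "1 - p < F b" "0 \<le> b"
    unfolding eventually_at_top_linorder by (metis max.cobounded1 max.cobounded2)
  have "continuous_on {0..b} F"
    using lifetime_continuous_on[OF L] by (rule continuous_on_subset) auto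
  then obtain x where x: "0 \<le> x" "F x = 1 - p"
    using IVT'[of F 0 "1 - p" b] b lifetime_nonpos_eq_0[OF L, of 0] p by force
  moreover have "x \<noteq> 0"
    using x lifetime_nonpos_eq_0[OF L, of 0] p by auto
  ultimately show ?thesis
    by (intro exI[of _ x]) (auto simp: surv_def)
qed

lemma hazard_nonneg:
  assumes "lifetime F f" "0 \<le> x"
  shows "0 \<le> hazard F f x"
  using lifetime_density_nonneg[OF assms] lifetime_less_1[OF assms]
  by (simp add: hazard_def surv_def)

lemma antimono_on_imp_deriv_nonpos:
  fixes f :: "real \<Rightarrow> real"
  assumes "antimono_on A f" "(f has_real_derivative D) (at x)" "x \<in> interior A"
  shows "D \<le> 0"
proof -
  have "mono_on A (\<lambda>x. - f x)"
    using assms(1) by (simp add: monotone_on_def)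
  then have "0 \<le> - D"
    using assms(2,3) by (intro mono_on_imp_deriv_nonneg) (auto intro: DERIV_minus)
  then show ?thesis by simp
qed

lemma right_deriv_nonneg_at_min:
  fixes \<phi> :: "real \<Rightarrow> real"
  assumes D: "(\<phi> has_real_derivative D) (at a within {a..})" and b: "a < b"
    and min: "\<And>t. a < t \<Longrightarrow> t \<le> b \<Longrightarrow> \<phi> a \<le> \<phi> t"
  shows "0 \<le> D"
proof (rule tendsto_lowerbound)
  show "((\<lambda>t. (\<phi> t - \<phi> a) / (t - a)) \<longlongrightarrow> D) (at_right a)"
    using D by (simp add: has_field_derivative_iff at_within_Ici_at_right)
  show "\<forall>\<^sub>F t in at_right a. 0 \<le> (\<phi> t - \<phi> a) / (t - a)"
    unfolding eventually_at_right_field using b min by (intro exI[of _ b]) auto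
qed simp

lemma mono_on_mult_nonneg:
  fixes u v :: "'a::order \<Rightarrow> 'b::linordered_semiring"
  assumes "mono_on S u" "mono_on S v" "\<And>x. x \<in> S \<Longrightarrow> 0 \<le> u x" "\<And>x. x \<in> S \<Longrightarrow> 0 \<le> v x"
  shows "mono_on S (\<lambda>x. u x * v x)"
  using assms by (intro mono_onI mult_mono) (auto dest: mono_onD)

locale coherent_system =
  fixes F f G g h :: "real \<Rightarrow> real"
  assumes components: "lifetime F f" and system: "lifetime G g"
    and domination: "domination_fun h"
    and domination_differentiable: "\<forall>p\<in>{0<..<1}. h differentiable (at p)"
    and surv_system: "\<forall>x\<ge>0. surv G x = h (surv F x)"
begin

lemma domination_in_unit:
  assumes p: "p \<in> {0<..<1}"
  shows "h p \<in> {0<..<1}"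
proof -
  obtain x where x: "0 < x" "surv F x = p"
    using surv_attains[OF components p] by blast
  then have "h p = surv G x"
    using surv_system by simp
  then show ?thesis
    using surv_in_unit[OF system x(1)] by simp
qed

lemma domination_DERIV:
  assumes "p \<in> {0<..<1}"
  shows "(h has_real_derivative deriv h p) (at p)"
  using assms domination_differentiable DERIV_deriv_iff_real_differentiable by blast

lemma Hfun_nonneg:
  assumes p: "p \<in> {0<..<1}"
  shows "0 \<le> Hfun h p"
proof -
  have "mono_on {0..1} h"
    using domination unfolding domination_fun_def by blast
  then have "0 \<le> deriv h p"
    using p domination_DERIV[OF p] by (intro mono_on_imp_deriv_nonneg) auto
  then show ?thesis
    using p domination_in_unit[OF p] by (simp add: Hfun_def)
qed

lemma Hfun_not_vanishing_near_1:
  assumes p: "p \<in> {0<..<1}"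
  shows "\<exists>t\<in>{p<..<1}. Hfun h t \<noteq> 0"
proof (rule ccontr)
  assume "\<not> ?thesis"
  then have "deriv h t = 0" if "t \<in> {p<..<1}" for t
    using that p domination_in_unit[of t] by (auto simp: Hfun_def)
  then have "(h has_real_derivative 0) (at t)" if "p < t" "t < 1" for t
    using that p domination_DERIV[of t] by fastforce
  moreover have "continuous_on {p..1} h"
    using domination p unfolding domination_fun_def by (auto elim: continuous_on_subset)
  ultimately have "h 1 = h p"
    using p by (intro DERIV_isconst_end) auto
  then show False
    using domination domination_in_unit[OF p] unfolding domination_fun_def by simp
qed

lemma hazard_system:
  assumes x: "0 < x"
  shows "hazard G g x = Hfun h (surv F x) * hazard F f x"
proof -
  define p where "p = surv F x"
  have p: "p \<in> {0<..<1}"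
    using surv_in_unit[OF components x] by (simp add: p_def)
  have "((\<lambda>y. h (surv F y)) has_real_derivative deriv h p * - f x) (at x)"
    using DERIV_chain2[OF domination_DERIV[OF p, unfolded p_def] surv_DERIV[OF components x]]
    by (simp add: p_def)
  moreover have "((\<lambda>y. h (surv F y)) has_real_derivative - g x) (at x)"
  proof (rule has_field_derivative_transform_within_open[of _ _ _ "{0<..}"])
    show "(surv G has_real_derivative - g x) (at x)"
      using surv_DERIV[OF system x] .
  qed (use x surv_system in auto)
  ultimately have "g x = deriv h p * f x"
    using DERIV_unique by fastforce
  moreover have "surv G x = h p"
    using surv_system x by (simp add: p_def)
  ultimately show ?thesis
    using p domination_in_unit[OF p] unfolding hazard_def Hfun_def p_def
    by (simp add: field_simps)
qed

lemma Hfun_pos_if_antimono: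
  assumes anti: "antimono_on {0<..<1} (Hfun h)" and p: "p \<in> {0<..<1}"
  shows "0 < Hfun h p"
proof (rule ccontr)
  assume "\<not> 0 < Hfun h p"
  then have "Hfun h p = 0"
    using Hfun_nonneg[OF p] by simp
  then have "Hfun h t = 0" if "t \<in> {p<..<1}" for t
    using that p monotone_onD[OF anti, of p t] Hfun_nonneg[of t] by fastforce
  then show False
    using Hfun_not_vanishing_near_1[OF p] by blast
qed

text \<open>Here the junk value \<open>u p / 0 = 0\<close> is what makes a zero of \<open>Hfun h\<close> propagate to the right.\<close>
lemma Hfun_pos_if_antimono_ratio:
  assumes anti: "antimono_on {0<..<1} (\<lambda>p. u p / Hfun h p)"
    and u: "\<And>t. t \<in> {0<..<1} \<Longrightarrow> 0 < u t" and p: "p \<in> {0<..<1}"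
  shows "0 < Hfun h p"
proof (rule ccontr)
  assume "\<not> 0 < Hfun h p"
  then have "Hfun h p = 0"
    using Hfun_nonneg[OF p] by simp
  then have "u t / Hfun h t \<le> 0" if "t \<in> {p<..<1}" for t
    using that p monotone_onD[OF anti, of p t] by fastforce
  then have "Hfun h t = 0" if "t \<in> {p<..<1}" for t
    using that p u[of t] Hfun_nonneg[of t] by (fastforce simp: divide_le_0_iff)
  then show False
    using Hfun_not_vanishing_near_1[OF p] by blast
qed

end

lemma antimono_on_divide_imp_log_deriv_le:
  fixes u v :: "real \<Rightarrow> real"
  assumes anti: "antimono_on A (\<lambda>p. u p / v p)" and p: "p \<in> interior A"
    and du: "(u has_real_derivative u') (at p)" and dv: "(v has_real_derivative v') (at p)"
    and pos: "0 < u p" "0 < v p"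
  shows "u' / u p \<le> v' / v p"
proof -
  have "(u' * v p - u p * v') / (v p * v p) \<le> 0"
    using antimono_on_imp_deriv_nonpos[OF anti DERIV_divide[OF du dv] p] pos by simp
  then show ?thesis
    using pos by (simp add: divide_le_0_iff divide_simps mult.commute)
qed

lemma DERIV_ratio_comp_surv:
  fixes H1 H2 :: "real \<Rightarrow> real"
  assumes LX: "lifetime FX fX" and LY: "lifetime FY fY" and x: "0 < x"
    and D1: "(H1 has_real_derivative D1) (at (surv FX x))"
    and D2: "(H2 has_real_derivative D2) (at (surv FY x))"
    and nz: "H1 (surv FX x) \<noteq> 0" "H2 (surv FY x) \<noteq> 0"
  shows "((\<lambda>y. H1 (surv FX y) / H2 (surv FY y)) has_real_derivative
      H1 (surv FX x) / H2 (surv FY x) * (D2 * fY x / H2 (surv FY x) - D1 * fX x / H1 (surv FX x))) (at x)"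
  using DERIV_divide[OF DERIV_chain2[OF D1 surv_DERIV[OF LX x]] DERIV_chain2[OF D2 surv_DERIV[OF LY x]] nz(2)]
  by (rule DERIV_cong) (use nz in \<open>simp add: field_simps\<close>)

lemma rhr_le_imp_cdf_le:
  assumes LX: "lifetime FX fX" and LY: "lifetime FY fY" and rhr: "rhr_le FY FX" and x: "0 < x"
  shows "FX x \<le> FY x"
proof -
  have "((\<lambda>y. FX y / FY y) \<longlongrightarrow> 1) at_top"
    using tendsto_divide[OF lifetime_tendsto_1[OF LX] lifetime_tendsto_1[OF LY]] by simp
  then have "FX x / FY x \<le> 1"
  proof (rule tendsto_lowerbound)
    show "\<forall>\<^sub>F y in at_top. FX x / FY x \<le> FX y / FY y"
      using rhr x unfolding rhr_le_def eventually_at_top_linorder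
      by (intro exI[of _ x]) (auto elim: mono_onD)
  qed simp
  then show ?thesis
    using lifetime_pos[OF LY x] by simp
qed

lemma rhr_le_imp_reversed_hazard_le:
  assumes LX: "lifetime FX fX" and LY: "lifetime FY fY" and rhr: "rhr_le FY FX" and x: "0 < x"
  shows "fY x / FY x \<le> fX x / FX x"
proof -
  have pos: "0 < FX x" "0 < FY x"
    using lifetime_pos[OF LX x] lifetime_pos[OF LY x] .
  have "((\<lambda>y. FX y / FY y) has_real_derivative (fX x * FY x - FX x * fY x) / (FY x * FY x)) (at x)"
    using DERIV_divide[OF lifetime_DERIV[OF LX x] lifetime_DERIV[OF LY x]] pos by simp
  then have "0 \<le> (fX x * FY x - FX x * fY x) / (FY x * FY x)"
    using rhr x unfolding rhr_le_def by (intro mono_on_imp_deriv_nonneg) (auto simp: interior_open)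
  then show ?thesis
    using pos by (simp add: zero_le_divide_iff divide_simps mult.commute)
qed

lemma ages_faster_rhr_le_density_pos:
  assumes LX: "lifetime FX fX" and LY: "lifetime FY fY"
    and af: "ages_faster FX fX FY fY" and rhr: "rhr_le FY FX" and x: "0 < x"
  shows "0 < fY x"
proof (rule ccontr)
  assume "\<not> 0 < fY x"
  then have "fY x = 0"
    using lifetime_density_nonneg[OF LY less_imp_le[OF x]] by simp
  then have ratio_x: "hazard FX fX x / hazard FY fY x = 0"
    by (simp add: hazard_def)
  obtain z where z: "0 < z" "z < x" "0 < fY z"
    using lifetime_density_pos_somewhere[OF LY x] by auto
  then have "0 < fX z / FX z"
    using rhr_le_imp_reversed_hazard_le[OF LX LY rhr z(1)] lifetime_pos[OF LY z(1)]
    by (meson divide_pos_pos less_le_trans)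
  then have "0 < fX z"
    using lifetime_pos[OF LX z(1)] by (simp add: zero_less_divide_iff)
  then have "0 < hazard FX fX z / hazard FY fY z"
    using z surv_in_unit[OF LX z(1)] surv_in_unit[OF LY z(1)] by (simp add: hazard_def)
  moreover have "hazard FX fX z / hazard FY fY z \<le> hazard FX fX x / hazard FY fY x"
    using af z unfolding ages_faster_def by (auto elim: mono_onD)
  ultimately show False
    using ratio_x by simp
qed

context
  fixes H1 H2 :: "real \<Rightarrow> real"
  assumes pos1: "\<forall>p\<in>{0<..<1}. 0 < H1 p" and pos2: "\<forall>p\<in>{0<..<1}. 0 < H2 p"
    and diff1: "\<forall>p\<in>{0<..<1}. H1 differentiable (at p)"
    and diff2: "\<forall>p\<in>{0<..<1}. H2 differentiable (at p)"
    and anti1: "antimono_on {0<..<1} H1"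
    and anti_ratio: "antimono_on {0<..<1} (\<lambda>p. H1 p / H2 p)"
    and anti_scaled: "antimono_on {0<..<1} (\<lambda>p. (1 - p) * deriv H1 p / H1 p)
           \<or> antimono_on {0<..<1} (\<lambda>p. (1 - p) * deriv H2 p / H2 p)"
begin

lemma scaled_log_deriv_bounds:
  assumes p: "p \<in> {0<..<1}" and q: "q \<in> {0<..<1}" and "q \<le> p"
  shows "(1 - p) * deriv H1 p / H1 p \<le> 0"
    and "(1 - p) * deriv H1 p / H1 p \<le> (1 - q) * deriv H2 q / H2 q"
proof -
  define \<psi>1 where "\<psi>1 t = (1 - t) * deriv H1 t / H1 t" for t
  define \<psi>2 where "\<psi>2 t = (1 - t) * deriv H2 t / H2 t" for t
  have D1: "(H1 has_real_derivative deriv H1 t) (at t)" if "t \<in> {0<..<1}" for t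
    using diff1 that DERIV_deriv_iff_real_differentiable by blast
  have D2: "(H2 has_real_derivative deriv H2 t) (at t)" if "t \<in> {0<..<1}" for t
    using diff2 that DERIV_deriv_iff_real_differentiable by blast
  show "(1 - p) * deriv H1 p / H1 p \<le> 0"
    using antimono_on_imp_deriv_nonpos[OF anti1 D1[OF p]] p pos1
    by (simp add: interior_open mult_nonneg_nonpos divide_nonpos_pos)
  have \<psi>1_le_\<psi>2: "\<psi>1 t \<le> \<psi>2 t" if t: "t \<in> {0<..<1}" for t
  proof -
    have "deriv H1 t / H1 t \<le> deriv H2 t / H2 t"
      using antimono_on_divide_imp_log_deriv_le[OF anti_ratio _ D1[OF t] D2[OF t]] t pos1 pos2
      by (simp add: interior_open)
    then show ?thesis
      unfolding \<psi>1_def \<psi>2_def times_divide_eq_right[symmetric] using t by (intro mult_left_mono) auto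
  qed
  have "\<psi>1 p \<le> \<psi>2 q"
    using anti_scaled
  proof
    assume anti: "antimono_on {0<..<1} (\<lambda>p. (1 - p) * deriv H1 p / H1 p)"
    have "\<psi>1 p \<le> \<psi>1 q"
      using monotone_onD[OF anti, of q p] p q \<open>q \<le> p\<close> by (simp add: \<psi>1_def)
    then show ?thesis
      using \<psi>1_le_\<psi>2[OF q] by simp
  next
    assume anti: "antimono_on {0<..<1} (\<lambda>p. (1 - p) * deriv H2 p / H2 p)"
    have "\<psi>2 p \<le> \<psi>2 q"
      using monotone_onD[OF anti, of q p] p q \<open>q \<le> p\<close> by (simp add: \<psi>2_def)
    then show ?thesis
      using \<psi>1_le_\<psi>2[OF p] by simp
  qed
  then show "(1 - p) * deriv H1 p / H1 p \<le> (1 - q) * deriv H2 q / H2 q"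
    by (simp add: \<psi>1_def \<psi>2_def)
qed

lemma mono_on_ratio_comp_surv:
  assumes LX: "lifetime FX fX" and LY: "lifetime FY fY" and rhr: "rhr_le FY FX"
  shows "mono_on {0<..} (\<lambda>x. H1 (surv FX x) / H2 (surv FY x))"
proof -
  have nonneg_DERIV: "\<exists>D. ((\<lambda>y. H1 (surv FX y) / H2 (surv FY y)) has_real_derivative D) (at x) \<and> 0 \<le> D"
    if x: "0 < x" for x
  proof (intro exI conjI)
    define p where "p = surv FX x"
    define q where "q = surv FY x"
    have pq: "p \<in> {0<..<1}" "q \<in> {0<..<1}"
      using surv_in_unit[OF LX x] surv_in_unit[OF LY x] by (simp_all add: p_def q_def)
    have H_pos: "0 < H1 p" "0 < H2 q"
      using pq pos1 pos2 by auto
    define \<psi>1 where "\<psi>1 = (1 - p) * deriv H1 p / H1 p"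
    define \<psi>2 where "\<psi>2 = (1 - q) * deriv H2 q / H2 q"
    define \<alpha> where "\<alpha> = fX x / FX x"
    define \<beta> where "\<beta> = fY x / FY x"
    have "q \<le> p"
      using rhr_le_imp_cdf_le[OF LX LY rhr x] by (simp add: p_def q_def surv_def)
    then have \<psi>1_nonpos: "\<psi>1 \<le> 0" and \<psi>1_le_\<psi>2: "\<psi>1 \<le> \<psi>2"
      using scaled_log_deriv_bounds[OF pq] by (simp_all add: \<psi>1_def \<psi>2_def)
    have \<beta>_le_\<alpha>: "\<beta> \<le> \<alpha>" and \<beta>_nonneg: "0 \<le> \<beta>"
      using rhr_le_imp_reversed_hazard_le[OF LX LY rhr x] lifetime_pos[OF LY x]
        lifetime_density_nonneg[OF LY less_imp_le[OF x]] by (simp_all add: \<alpha>_def \<beta>_def)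
    have "\<psi>1 * \<alpha> \<le> \<psi>2 * \<beta>"
      using mult_left_mono_neg[OF \<beta>_le_\<alpha> \<psi>1_nonpos] mult_right_mono[OF \<psi>1_le_\<psi>2 \<beta>_nonneg]
      by linarith
    moreover have "deriv H2 q * fY x / H2 q - deriv H1 p * fX x / H1 p = \<psi>2 * \<beta> - \<psi>1 * \<alpha>"
      using pq pos1 pos2 unfolding \<psi>1_def \<psi>2_def \<alpha>_def \<beta>_def p_def q_def
      by (simp add: surv_def field_simps)
    ultimately have "0 \<le> deriv H2 q * fY x / H2 q - deriv H1 p * fX x / H1 p"
      by simp
    then show "0 \<le> H1 p / H2 q * (deriv H2 q * fY x / H2 q - deriv H1 p * fX x / H1 p)"
      using H_pos by simp
    have D: "(H1 has_real_derivative deriv H1 p) (at p)" "(H2 has_real_derivative deriv H2 q) (at q)"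
      using diff1 diff2 pq DERIV_deriv_iff_real_differentiable by blast+
    show "((\<lambda>y. H1 (surv FX y) / H2 (surv FY y)) has_real_derivative
        H1 p / H2 q * (deriv H2 q * fY x / H2 q - deriv H1 p * fX x / H1 p)) (at x)"
      using DERIV_ratio_comp_surv[OF LX LY x D[unfolded p_def q_def]] H_pos
      unfolding p_def q_def by simp
  qed
  show ?thesis
    by (rule mono_onI, rule DERIV_nonneg_imp_nondecreasing) (use nonneg_DERIV in auto)
qed

end

text \<open>The densities need not be continuous at 0, so the bound at 0 comes from comparing the
  cumulative hazards \<open>- ln (surv G t)\<close>, whose right derivatives at 0 are the hazard rates.\<close>
lemma hazard_bound_at_0:
  assumes L1: "lifetime G1 g1" and L2: "lifetime G2 g2" and b: "0 < b"
    and bound: "\<And>t. 0 < t \<Longrightarrow> t \<le> b \<Longrightarrow> hazard G1 g1 t \<le> c * hazard G2 g2 t"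
  shows "hazard G1 g1 0 \<le> c * hazard G2 g2 0"
proof -
  define \<phi> where "\<phi> t = ln (surv G1 t) - c * ln (surv G2 t)" for t
  have D: "(\<phi> has_real_derivative c * hazard G2 g2 t - hazard G1 g1 t) (at t within {0..})"
    if t: "0 \<le> t" for t
  proof -
    have "((\<lambda>t. ln (1 - G1 t) - c * ln (1 - G2 t)) has_real_derivative
        - g1 t / (1 - G1 t) - c * (- g2 t / (1 - G2 t))) (at t within {0..})"
      using lifetime_less_1[OF L1 t] lifetime_less_1[OF L2 t]
        lifetime_DERIV_within[OF L1 t] lifetime_DERIV_within[OF L2 t]
      by (auto intro!: derivative_eq_intros simp: field_simps)
    then show ?thesis
      by (simp add: \<phi>_def[abs_def] hazard_def surv_def)
  qed
  have "\<phi> 0 \<le> \<phi> t" if t: "0 < t" "t \<le> b" for t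
  proof (rule DERIV_nonneg_imp_increasing_open[of 0 t \<phi>])
    show "\<exists>D. (\<phi> has_real_derivative D) (at y) \<and> 0 \<le> D" if "0 < y" "y < t" for y
      using D[of y] bound[of y] at_within_atLeast_0[of y] that t by auto
    have "continuous_on {0..} \<phi>"
      using D DERIV_continuous unfolding continuous_on_eq_continuous_within by blast
    then show "continuous_on {0..t} \<phi>"
      by (rule continuous_on_subset) auto
  qed (use t in simp)
  then have "0 \<le> c * hazard G2 g2 0 - hazard G1 g1 0"
    using right_deriv_nonneg_at_min[OF D[of 0] b] by simp
  then show ?thesis
    by simp
qed

lemma ages_faster_if_mono_on_pos:
  assumes L1: "lifetime G1 g1" and L2: "lifetime G2 g2"
    and pos: "\<And>t. 0 < t \<Longrightarrow> 0 < hazard G2 g2 t"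
    and mono: "mono_on {0<..} (\<lambda>x. hazard G1 g1 x / hazard G2 g2 x)"
  shows "ages_faster G1 g1 G2 g2"
  unfolding ages_faster_def
proof (rule mono_onI)
  fix r s :: real
  assume rs: "r \<in> {0..}" "s \<in> {0..}" "r \<le> s"
  show "hazard G1 g1 r / hazard G2 g2 r \<le> hazard G1 g1 s / hazard G2 g2 s"
  proof (cases "0 < r")
    case True
    then show ?thesis
      using rs mono by (auto elim: mono_onD)
  next
    case False
    with rs have r: "r = 0" by simp
    show ?thesis
    proof (cases "s = 0")
      case False
      with rs have s: "0 < s" by simp
      define c where "c = hazard G1 g1 s / hazard G2 g2 s"
      have "0 \<le> c"
        using hazard_nonneg[OF L1] hazard_nonneg[OF L2] rs by (simp add: c_def)
      have "hazard G1 g1 t \<le> c * hazard G2 g2 t" if "0 < t" "t \<le> s" for t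
        using mono_onD[OF mono, of t s] that s pos[OF that(1)] by (simp add: c_def divide_le_eq)
      then have "hazard G1 g1 0 \<le> c * hazard G2 g2 0"
        by (rule hazard_bound_at_0[OF L1 L2 s])
      then show ?thesis
        using \<open>0 \<le> c\<close> hazard_nonneg[OF L2, of 0] r
        by (cases "hazard G2 g2 0 = 0") (auto simp: c_def[symmetric] divide_le_eq)
    qed (use r in simp)
  qed
qed

theorem theorem3p1:
  fixes FX fX FY fY G1 g1 G2 g2 h1 h2 :: "real \<Rightarrow> real"
  assumes X: "lifetime FX fX" and Y: "lifetime FY fY"
    and T1: "lifetime G1 g1" and T2: "lifetime G2 g2"
    and h1: "domination_fun h1" and h2: "domination_fun h2"
    and h1_diff: "\<forall>p\<in>{0<..<1}. h1 differentiable (at p)"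
    and h2_diff: "\<forall>p\<in>{0<..<1}. h2 differentiable (at p)"
    and H1_diff: "\<forall>p\<in>{0<..<1}. Hfun h1 differentiable (at p)"
    and H2_diff: "\<forall>p\<in>{0<..<1}. Hfun h2 differentiable (at p)"
    and sys1: "\<forall>x\<ge>0. surv G1 x = h1 (surv FX x)"
    and sys2: "\<forall>x\<ge>0. surv G2 x = h2 (surv FY x)"
    and i1: "antimono_on {0<..<1} (Hfun h1)"
    and i2: "antimono_on {0<..<1} (\<lambda>p. Hfun h1 p / Hfun h2 p)"
    and ii: "antimono_on {0<..<1} (\<lambda>p. (1 - p) * deriv (Hfun h1) p / Hfun h1 p)
           \<or> antimono_on {0<..<1} (\<lambda>p. (1 - p) * deriv (Hfun h2) p / Hfun h2 p)"
    and iii1: "ages_faster FX fX FY fY"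
    and iii2: "rhr_le FY FX"
  shows "ages_faster G1 g1 G2 g2"
proof -
  interpret sys1: coherent_system FX fX G1 g1 h1
    using X T1 h1 h1_diff sys1 by unfold_locales
  interpret sys2: coherent_system FY fY G2 g2 h2
    using Y T2 h2 h2_diff sys2 by unfold_locales
  have H1_pos: "\<forall>p\<in>{0<..<1}. 0 < Hfun h1 p"
    using sys1.Hfun_pos_if_antimono[OF i1] by blast
  have H2_pos: "\<forall>p\<in>{0<..<1}. 0 < Hfun h2 p"
    using sys2.Hfun_pos_if_antimono_ratio[OF i2] H1_pos by blast
  have "mono_on {0<..} (\<lambda>x. Hfun h1 (surv FX x) / Hfun h2 (surv FY x))"
    using mono_on_ratio_comp_surv[OF H1_pos H2_pos H1_diff H2_diff i1 i2 ii X Y iii2] .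
  moreover have "mono_on {0<..} (\<lambda>x. hazard FX fX x / hazard FY fY x)"
    using iii1 unfolding ages_faster_def by (rule mono_on_subset) auto
  ultimately have "mono_on {0<..}
      (\<lambda>x. Hfun h1 (surv FX x) / Hfun h2 (surv FY x) * (hazard FX fX x / hazard FY fY x))"
    by (rule mono_on_mult_nonneg)
      (use H1_pos H2_pos surv_in_unit[OF X] surv_in_unit[OF Y] hazard_nonneg[OF X] hazard_nonneg[OF Y]
        in \<open>auto intro!: divide_nonneg_nonneg less_imp_le\<close>)
  then have "mono_on {0<..} (\<lambda>x. hazard G1 g1 x / hazard G2 g2 x)"
    by (auto simp: monotone_on_def sys1.hazard_system sys2.hazard_system)
  moreover have "0 < hazard G2 g2 t" if "0 < t" for t
    using sys2.hazard_system[OF that] H2_pos surv_in_unit[OF Y that]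
      ages_faster_rhr_le_density_pos[OF X Y iii1 iii2 that] by (simp add: hazard_def surv_def)
  ultimately show ?thesis
    using ages_faster_if_mono_on_pos[OF T1 T2] by blast
qed

end
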